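(* As formal power series, $$1+\sum_{n\ge1}H_{2n-1}s^n=\cfrac{1}{1-\cfrac{1^2s}{1-\cfrac{1^2s}{1-\cfrac{2^2s}{1-\cfrac{2^2s}{1-\cfrac{3^2 s}{1-\cfrac{3^2s}{1-\cdots}}}}}}},$$ i.e. the partial numerators are $e_{2m-1}s=e_{2m}s=m^2s$ for $m\ge1$.
   Context: The median Genocchi numbers $H_{2n-1}$ ($1,2,8,56,608,\dots$) are defined via the Seidel triangle: numbers $g_{k,m}$, $m\ge1$, $1\le k\le (m+1)/2$, with $g_{1,1}=1$, $g_{k,2m}=\sum_{i\ge k}g_{i,2m-1}$, $g_{k,2m+1}=\sum_{i\le k}g_{i,2m}$, and $H_{2n-1}=g_{1,2n}$. *)

theory Defs
  imports "HOL-Computational_Algebra.Formal_Power_Series"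
begin

text \<open>Seidel triangle: seidel k m = g_{k,m} for m \<ge> 1 and 1 \<le> k \<le> (m+1)/2; zero outside this range.\<close>
fun seidel :: "nat \<Rightarrow> nat \<Rightarrow> nat" where
  "seidel k 0 = 0"
| "seidel k (Suc 0) = (if k = 1 then 1 else 0)"
| "seidel k (Suc (Suc m)) =
     (if k < 1 \<or> k > (m + 3) div 2 then 0
      else if even m then (\<Sum>i\<in>{k..(m + 2) div 2}. seidel i (Suc m))
      else (\<Sum>i\<in>{1..k}. seidel i (Suc m)))"

text \<open>Median Genocchi number H_{2n-1} = g_{1,2n}.\<close>
definition median_genocchi :: "nat \<Rightarrow> nat" where
  "median_genocchi n = seidel 1 (2 * n)"

definition cf_e :: "nat \<Rightarrow> nat" where
  "cf_e j = ((j + 1) div 2) ^ 2"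

fun cf_tail :: "nat \<Rightarrow> nat \<Rightarrow> rat fps" where
  "cf_tail j 0 = 1"
| "cf_tail j (Suc d) = inverse (1 - fps_const (of_nat (cf_e j)) * fps_X * cf_tail (Suc j) d)"

end

theory Submission
  imports Defs
begin

(* 1. Flajolet: the truncated fraction with partial numerators w_0 s, w_1 s, ... is the generating
      function of height-bounded Dyck paths whose down steps are weighted by w; for n <= N the
      height bound does not affect the n-th coefficient.
   2. For the weights 1, 1, 4, 4, 9, 9, ... we observe the paths at even times. The resulting weights
      obey a tridiagonal recursion which is also the action of the operator
      C f(y) = (y+1)^2 f(y+1) - y(y+1) f(y) on the basis k! y(y-1)...(y-k+1); hence the n-th
      coefficient equals (C^n 1)(0).
   3. The sequence Q_(m+2) = Q_(m+1) - C Q_m has Q_(2n)(0) = 0, which gives a linear recurrence for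
      (C^n 1)(0) with leading coefficient 1.
   4. Closed forms of the rows of the Seidel triangle in terms of the H_n show that the median
      Genocchi numbers satisfy the same recurrence, so both sequences coincide. *)

fun stieltjes_cf :: "(nat \<Rightarrow> 'a::field) \<Rightarrow> nat \<Rightarrow> 'a fps" where
  "stieltjes_cf w 0 = 1"
| "stieltjes_cf w (Suc d) = inverse (1 - fps_const (w 0) * fps_X * stieltjes_cf (\<lambda>i. w (Suc i)) d)"

lemma cf_tail_stieltjes: "cf_tail j d = stieltjes_cf (\<lambda>i. of_nat (cf_e (j + i))) d"
  by (induction d arbitrary: j) simp_all

(* Flajolet's combinatorial reading of such a fraction: bdyck w d n h is the total weight of the
   lattice paths with n steps +1/-1 from height 0 to height h that stay within [0, d], where a step
   down from height i+1 to height i has weight w i and a step up has weight 1. *)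
fun bdyck :: "(nat \<Rightarrow> 'a::comm_semiring_1) \<Rightarrow> nat \<Rightarrow> nat \<Rightarrow> nat \<Rightarrow> 'a" where
  "bdyck w d 0 h = (if h = 0 then 1 else 0)"
| "bdyck w d (Suc n) h = (if h = 0 then 0 else bdyck w d n (h - 1))
      + (if h < d then w h * bdyck w d n (Suc h) else 0)"

lemma bdyck_unreachable: "n < h \<Longrightarrow> bdyck w d n h = 0"
  by (induction n arbitrary: h) auto

definition level_gf :: "(nat \<Rightarrow> 'a::comm_semiring_1) \<Rightarrow> nat \<Rightarrow> nat \<Rightarrow> 'a fps" where
  "level_gf w d h = Abs_fps (\<lambda>n. bdyck w d (2*n + h) h)"

(* The last step into the top level d must be a step up. *)
lemma level_gf_top: "0 < d \<Longrightarrow> level_gf w d d = level_gf w d (d - 1)"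
proof (rule fps_ext)
  fix n assume "0 < d"
  then obtain d' where d': "d = Suc d'" by (cases d) auto
  then have "2*n + d = Suc (2*n + d')" by simp
  then show "fps_nth (level_gf w d d) n = fps_nth (level_gf w d (d - 1)) n"
    using d' by (simp add: level_gf_def)
qed

(* Decomposition by the last step for an intermediate level. *)
lemma level_gf_middle:
  assumes "0 < h" "h < d"
  shows "level_gf w d h = level_gf w d (h - 1) + fps_const (w h) * fps_X * level_gf w d (Suc h)"
proof (rule fps_ext)
  fix n
  obtain h' where h': "h = Suc h'" using assms by (cases h) auto
  have up: "2*n + h = Suc (2*n + h')" using h' by simp
  show "fps_nth (level_gf w d h) n
      = fps_nth (level_gf w d (h - 1) + fps_const (w h) * fps_X * level_gf w d (Suc h)) n"
  proof (cases n)
    case 0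
    then show ?thesis using assms up h' by (simp add: level_gf_def bdyck_unreachable mult.assoc)
  next
    case (Suc m)
    then have "2*n + h' = 2*m + Suc h" using h' by simp
    then show ?thesis using assms up h' Suc by (simp add: level_gf_def mult.assoc)
  qed
qed

(* At level 0 a nonempty path ends with a step down from level 1. *)
lemma level_gf_bottom:
  assumes "0 < d"
  shows "level_gf w d 0 = 1 + fps_const (w 0) * fps_X * level_gf w d 1"
proof (rule fps_ext)
  fix n
  show "fps_nth (level_gf w d 0) n = fps_nth (1 + fps_const (w 0) * fps_X * level_gf w d 1) n"
  proof (cases n)
    case (Suc m)
    then have "2*n = Suc (2*m + 1)" by simp
    then show ?thesis using assms Suc by (simp add: level_gf_def mult.assoc)
  qed (simp add: level_gf_def)
qed

lemma fps_solve_linear: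
  fixes F G R :: "'a::field fps"
  assumes "fps_nth F 0 = 1" "F * G = R"
  shows "G = inverse F * R"
proof -
  have "inverse F * F = 1" using assms(1) by (simp add: inverse_mult_eq_1)
  then show ?thesis using assms(2) by (metis mult.assoc mult_1)
qed

(* Solving the level equations from the top down: the ratio of consecutive level generating
   functions is the tail of the continued fraction starting at that level. *)
lemma level_gf_ratio:
  fixes w :: "nat \<Rightarrow> 'a::field"
  assumes "0 < h" "h \<le> d"
  shows "level_gf w d h = stieltjes_cf (\<lambda>i. w (h + i)) (d - h) * level_gf w d (h - 1)"
  using assms
proof (induction "d - h" arbitrary: h)
  case 0
  then show ?case using level_gf_top[of d w] by simp
next
  case (Suc i)
  then have hd: "h < d" by simp
  define K where "K = stieltjes_cf (\<lambda>i. w (Suc h + i)) (d - Suc h)"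
  have above: "level_gf w d (Suc h) = K * level_gf w d h"
    using Suc.hyps(1)[of "Suc h"] Suc.hyps(2) hd by (simp add: K_def)
  have "(1 - fps_const (w h) * fps_X * K) * level_gf w d h = level_gf w d (h - 1)"
    using level_gf_middle[OF Suc.prems(1) hd, of w] above by (simp add: algebra_simps)
  then have "level_gf w d h = inverse (1 - fps_const (w h) * fps_X * K) * level_gf w d (h - 1)"
    by (rule fps_solve_linear[rotated]) simp
  moreover have "d - h = Suc (d - Suc h)" using hd by simp
  ultimately show ?case by (simp add: K_def)
qed

lemma stieltjes_cf_eq_level_gf: "stieltjes_cf w d = level_gf w d 0"
proof (cases d)
  case 0
  show ?thesis
  proof (rule fps_ext)
    fix n show "fps_nth (stieltjes_cf w d) n = fps_nth (level_gf w d 0) n"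
      using 0 by (cases n) (simp_all add: level_gf_def)
  qed
next
  case (Suc d')
  define K where "K = stieltjes_cf (\<lambda>i. w (Suc i)) d'"
  have "level_gf w d 1 = K * level_gf w d 0"
    using level_gf_ratio[of 1 d w] Suc by (simp add: K_def)
  then have "(1 - fps_const (w 0) * fps_X * K) * level_gf w d 0 = 1"
    using level_gf_bottom[of d w] Suc by (simp add: algebra_simps)
  then have "level_gf w d 0 = inverse (1 - fps_const (w 0) * fps_X * K) * 1"
    by (rule fps_solve_linear[rotated]) simp
  then show ?thesis using Suc by (simp add: K_def)
qed

theorem stieltjes_cf_nth: "fps_nth (stieltjes_cf w d) n = bdyck w d (2*n) 0"
  by (simp add: stieltjes_cf_eq_level_gf level_gf_def)

fun dyck :: "(nat \<Rightarrow> 'a::comm_semiring_1) \<Rightarrow> nat \<Rightarrow> nat \<Rightarrow> 'a" where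
  "dyck w 0 h = (if h = 0 then 1 else 0)"
| "dyck w (Suc n) h = (if h = 0 then 0 else dyck w n (h - 1)) + w h * dyck w n (Suc h)"

lemma dyck_unreachable: "n < h \<Longrightarrow> dyck w n h = 0"
  by (induction n arbitrary: h) auto

(* A path of length n that ends at height h never rises above (n + h)/2, so the bound d is
   invisible once n + h <= 2d. *)
lemma bdyck_eq_dyck: "h \<le> d \<Longrightarrow> n + h \<le> 2*d \<Longrightarrow> bdyck w d n h = dyck w n h"
proof (induction n arbitrary: h)
  case (Suc n)
  show ?case
  proof (cases "h < d")
    case False
    with Suc.prems have "h = d" by simp
    moreover have "dyck w n (Suc h) = 0" using Suc.prems \<open>h = d\<close> by (intro dyck_unreachable) simp
    ultimately show ?thesis using Suc by auto
  qed (use Suc in auto)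
qed simp

lemma dyck_two_steps:
  "dyck w (Suc (Suc n)) h = (if 2 \<le> h then dyck w n (h - 2) else 0)
     + ((if h = 0 then 0 else w (h - 1)) + w h) * dyck w n h + w h * w (Suc h) * dyck w n (h + 2)"
proof (cases h)
  case (Suc h')
  then show ?thesis by (cases h') (simp_all add: algebra_simps numeral_2_eq_2)
qed (simp add: numeral_2_eq_2 algebra_simps)

definition genocchi_weight :: "nat \<Rightarrow> rat" where
  "genocchi_weight i = of_nat (cf_e (Suc i))"

lemma genocchi_weight_even: "genocchi_weight (2*k) = of_nat ((k+1)^2)"
  by (simp add: genocchi_weight_def cf_e_def)

lemma genocchi_weight_odd: "genocchi_weight (Suc (2*k)) = of_nat ((k+1)^2)"
  by (simp add: genocchi_weight_def cf_e_def)

(* Paths of length 2n ending at the even height 2k; contraction turns them into weighted Motzkin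
   paths with level weights k^2 + (k+1)^2 and descent weights (k+1)^4. *)
definition contracted :: "nat \<Rightarrow> nat \<Rightarrow> rat" where
  "contracted n k = dyck genocchi_weight (2*n) (2*k)"

lemma contracted_unreachable: "n < k \<Longrightarrow> contracted n k = 0"
  by (simp add: contracted_def dyck_unreachable)

lemma contracted_rec:
  "contracted (Suc n) k = (if k = 0 then 0 else contracted n (k - 1))
     + of_nat (k^2 + (k+1)^2) * contracted n k + of_nat ((k+1)^4) * contracted n (Suc k)"
proof -
  let ?w = genocchi_weight
  have level: "(if 2*k = 0 then 0 else ?w (2*k - 1)) + ?w (2*k) = of_nat (k^2 + (k+1)^2)"
  proof -
    have "?w (2*k - 1) = of_nat (k^2)" if "k \<noteq> 0"
    proof -
      obtain k' where k': "k = Suc k'" using \<open>k \<noteq> 0\<close> by (cases k) auto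
      then have "2*k - 1 = Suc (2*k')" by simp
      then show ?thesis using k' by (simp only: genocchi_weight_odd) simp
    qed
    then show ?thesis by (simp add: genocchi_weight_even)
  qed
  have descent: "?w (2*k) * ?w (Suc (2*k)) = of_nat ((k+1)^4)"
    by (simp add: genocchi_weight_even genocchi_weight_odd power_mult[symmetric])
  have lower: "(if 2 \<le> 2*k then dyck ?w (2*n) (2*k - 2) else 0) = (if k = 0 then 0 else contracted n (k - 1))"
    by (simp add: contracted_def right_diff_distrib')
  have "contracted (Suc n) k = dyck ?w (Suc (Suc (2*n))) (2*k)" by (simp add: contracted_def)
  also have "\<dots> = (if k = 0 then 0 else contracted n (k - 1))
     + of_nat (k^2 + (k+1)^2) * contracted n k + of_nat ((k+1)^4) * contracted n (Suc k)"
    unfolding dyck_two_steps lower level descent by (simp add: contracted_def)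
  finally show ?thesis .
qed

definition opC :: "(rat \<Rightarrow> rat) \<Rightarrow> rat \<Rightarrow> rat" where
  "opC f y = (y+1)^2 * f (y+1) - y*(y+1) * f y"

lemma opC_sum: "opC (\<lambda>y. \<Sum>k\<in>A. a k * p k y) y = (\<Sum>k\<in>A. a k * opC (p k) y)"
  unfolding opC_def sum_distrib_left right_diff_distrib sum_subtractf
  by (simp add: mult.left_commute)

fun falling :: "nat \<Rightarrow> rat \<Rightarrow> rat" where
  "falling 0 y = 1"
| "falling (Suc k) y = falling k y * (y - of_nat k)"

lemma falling_shift: "falling (Suc k) (y+1) = (y+1) * falling k y"
  by (induction k) (simp_all add: algebra_simps)

lemma falling_at_0: "0 < k \<Longrightarrow> falling k 0 = 0"
  by (induction k) auto

definition fbasis :: "nat \<Rightarrow> rat \<Rightarrow> rat" where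
  "fbasis k y = fact k * falling k y"

(* On this basis C acts by the same tridiagonal (Jacobi) matrix that governs the contracted
   paths. *)
lemma opC_fbasis:
  "opC (fbasis k) y = fbasis (Suc k) y + of_nat (k^2 + (k+1)^2) * fbasis k y + of_nat (k^4) * fbasis (k - 1) y"
proof (cases k)
  case 0 then show ?thesis by (simp add: opC_def fbasis_def power2_eq_square algebra_simps)
next
  case (Suc m)
  define F where "F = falling m y"
  define c where "c = (fact m :: rat)"
  have up: "fbasis k (y+1) = c * of_nat (Suc m) * (y+1) * F"
  proof -
    have "fbasis k (y+1) = fact (Suc m) * falling (Suc m) (y+1)" using Suc by (simp add: fbasis_def)
    also have "\<dots> = c * of_nat (Suc m) * (y+1) * F"
      by (simp only: falling_shift F_def c_def fact_Suc) (simp add: algebra_simps)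
    finally show ?thesis .
  qed
  have same: "fbasis k y = c * of_nat (Suc m) * F * (y - of_nat m)"
    using Suc by (simp add: fbasis_def F_def c_def algebra_simps)
  have raised: "fbasis (Suc k) y = c * of_nat (Suc m) * of_nat (Suc (Suc m)) * F * (y - of_nat m) * (y - of_nat (Suc m))"
    using Suc by (simp add: fbasis_def F_def c_def algebra_simps)
  have lowered: "fbasis (k - 1) y = c * F" using Suc by (simp add: fbasis_def F_def c_def)
  show ?thesis unfolding opC_def up same raised lowered using Suc
    by (simp add: algebra_simps power2_eq_square power4_eq_xxxx)
qed

lemma opC_coordinates:
  assumes vanish: "\<And>k. n < k \<Longrightarrow> a k = 0"
  shows "opC (\<lambda>y. \<Sum>k\<le>n. a k * fbasis k y) y
    = (\<Sum>k\<le>Suc n. ((if k = 0 then 0 else a (k - 1)) + of_nat (k^2 + (k+1)^2) * a k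
                      + of_nat ((k+1)^4) * a (Suc k)) * fbasis k y)"
proof -
  have "opC (\<lambda>y. \<Sum>k\<le>n. a k * fbasis k y) y = (\<Sum>k\<le>n. a k * opC (fbasis k) y)"
    by (rule opC_sum)
  also have "\<dots> = (\<Sum>k\<le>n. a k * fbasis (Suc k) y) + (\<Sum>k\<le>n. of_nat (k^2 + (k+1)^2) * a k * fbasis k y)
       + (\<Sum>k\<le>n. of_nat (k^4) * a k * fbasis (k - 1) y)"
    by (simp add: opC_fbasis sum.distrib algebra_simps)
  also have "(\<Sum>k\<le>n. a k * fbasis (Suc k) y) = (\<Sum>k\<le>Suc n. (if k = 0 then 0 else a (k - 1)) * fbasis k y)"
    by (simp add: sum.atMost_Suc_shift del: sum.atMost_Suc)
  also have "(\<Sum>k\<le>n. of_nat (k^2 + (k+1)^2) * a k * fbasis k y)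
      = (\<Sum>k\<le>Suc n. of_nat (k^2 + (k+1)^2) * a k * fbasis k y)"
    by (simp add: vanish)
  also have "(\<Sum>k\<le>n. of_nat (k^4) * a k * fbasis (k - 1) y)
      = (\<Sum>k\<le>Suc n. of_nat ((k+1)^4) * a (Suc k) * fbasis k y)"
  proof -
    have "(\<Sum>k\<le>n. of_nat (k^4) * a k * fbasis (k - 1) y) = (\<Sum>k\<le>Suc n. of_nat (k^4) * a k * fbasis (k - 1) y)"
      by (simp add: vanish)
    also have "\<dots> = (\<Sum>k\<le>n. of_nat ((k+1)^4) * a (Suc k) * fbasis k y)"
      by (simp add: sum.atMost_Suc_shift del: sum.atMost_Suc)
    also have "\<dots> = (\<Sum>k\<le>Suc n. of_nat ((k+1)^4) * a (Suc k) * fbasis k y)"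
      by (simp add: vanish)
    finally show ?thesis .
  qed
  finally show ?thesis by (simp add: sum.distrib algebra_simps)
qed

lemma opC_iterate: "(opC ^^ n) (\<lambda>_. 1) y = (\<Sum>k\<le>n. contracted n k * fbasis k y)"
proof (induction n arbitrary: y)
  case 0 then show ?case by (simp add: contracted_def fbasis_def)
next
  case (Suc n)
  have "(opC ^^ n) (\<lambda>_. 1) = (\<lambda>y. \<Sum>k\<le>n. contracted n k * fbasis k y)" using Suc.IH by (rule ext)
  then have "(opC ^^ Suc n) (\<lambda>_. 1) y = opC (\<lambda>y. \<Sum>k\<le>n. contracted n k * fbasis k y) y" by simp
  also have "\<dots> = (\<Sum>k\<le>Suc n. contracted (Suc n) k * fbasis k y)"
    by (simp only: opC_coordinates[OF contracted_unreachable] contracted_rec)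
  finally show ?case .
qed

(* Only the constant basis function survives at y = 0. *)
lemma opC_iterate_at_0: "(opC ^^ n) (\<lambda>_. 1) 0 = contracted n 0"
proof -
  have "(\<Sum>k\<le>n. contracted n k * fbasis k 0) = (\<Sum>k\<in>{0}. contracted n k * fbasis k 0)"
    by (rule sum.mono_neutral_right) (auto simp: fbasis_def falling_at_0)
  then show ?thesis by (simp add: opC_iterate fbasis_def)
qed

definition opB :: "(rat \<Rightarrow> rat) \<Rightarrow> rat \<Rightarrow> rat" where
  "opB f y = (y+1)^2 * f (y+1) - y^2 * f y"

lemma opB_eq_opC: "opB g y = opC g y + y * g y"
  by (simp add: opB_def opC_def algebra_simps power2_eq_square)

lemma opC_times_id: "opC (\<lambda>y. y * g y) y = (1 + y) * opB g y"
  by (simp add: opB_def opC_def algebra_simps power2_eq_square)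

lemma opC_scale: "opC (\<lambda>y. c * g y) y = c * opC g y"
  by (simp add: opC_def algebra_simps)

fun qseq :: "nat \<Rightarrow> rat \<Rightarrow> rat" where
  "qseq 0 = (\<lambda>_. 1)"
| "qseq (Suc 0) = (\<lambda>_. 1)"
| "qseq (Suc (Suc m)) = (\<lambda>y. qseq (Suc m) y - opC (qseq m) y)"

lemma qseq_closed_form:
  "qseq (Suc (2*n)) = (\<lambda>y. (-1)^n * (opB ^^ n) (\<lambda>_. 1) y) \<and>
   qseq (2*n + 2) = (\<lambda>y. (-1)^(Suc n) * y * (opB ^^ n) (\<lambda>_. 1) y)"
proof (induction n)
  case 0
  show ?case by (auto simp: opC_def fun_eq_iff power2_eq_square algebra_simps)
next
  case (Suc n)
  define g where "g = (opB ^^ n) (\<lambda>_. 1)"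
  have odd: "qseq (Suc (2*n)) = (\<lambda>y. (-1)^n * g y)"
    using conjunct1[OF Suc.IH] unfolding g_def .
  have even: "qseq (2*n + 2) = (\<lambda>y. (-1)^(Suc n) * y * g y)"
    using conjunct2[OF Suc.IH] unfolding g_def .
  have next_odd: "qseq (Suc (2 * Suc n)) y = (-1)^(Suc n) * opB g y" for y
  proof -
    have "qseq (Suc (2 * Suc n)) y = qseq (2*n + 2) y - opC (qseq (Suc (2*n))) y"
      by (simp add: numeral_2_eq_2)
    also have "\<dots> = (-1)^(Suc n) * y * g y - (-1)^n * opC g y"
      by (simp only: odd even opC_scale)
    finally show ?thesis by (simp add: opB_eq_opC algebra_simps)
  qed
  have next_even: "qseq (2 * Suc n + 2) y = (-1)^(Suc (Suc n)) * y * opB g y" for y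
  proof -
    have "qseq (2 * Suc n + 2) y = qseq (Suc (2 * Suc n)) y - opC (qseq (2*n + 2)) y"
      by (simp add: numeral_2_eq_2)
    also have "opC (qseq (2*n + 2)) y = (-1)^(Suc n) * opC (\<lambda>y. y * g y) y"
      unfolding even using opC_scale[of "(-1)^(Suc n)" "\<lambda>y. y * g y" y] by (simp add: mult.assoc)
    finally show ?thesis by (simp only: next_odd opC_times_id) (simp add: algebra_simps)
  qed
  have "(opB ^^ Suc n) (\<lambda>_. 1) = opB g" by (simp add: g_def)
  then show ?case by (simp only:) (intro conjI ext next_odd next_even)
qed

lemma qseq_even_at_0: "0 < n \<Longrightarrow> qseq (2*n) 0 = 0"
proof -
  assume "0 < n"
  then obtain m where m: "2*n = 2*m + 2" by (cases n) auto
  have "qseq (2*n) 0 = (-1)^(Suc m) * 0 * (opB ^^ m) (\<lambda>_. 1) 0"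
    unfolding m using fun_cong[OF conjunct2[OF qseq_closed_form[of m]], of 0] by (simp only:)
  then show ?thesis by simp
qed

(* Coefficients of Q_m as a polynomial in C (Fibonacci-type polynomials). *)
definition fib_coeff :: "nat \<Rightarrow> nat \<Rightarrow> rat" where
  "fib_coeff m j = (-1)^j * of_nat ((m - j) choose j)"

lemma fib_coeff_pascal:
  "j \<le> Suc (Suc m) \<Longrightarrow>
   fib_coeff (Suc (Suc m)) j = fib_coeff (Suc m) j - (if j = 0 then 0 else fib_coeff m (j - 1))"
proof (cases j)
  case (Suc i)
  assume j: "j \<le> Suc (Suc m)"
  show ?thesis
  proof (cases "j \<le> Suc m")
    case True
    then have "Suc (Suc m) - j = Suc (Suc m - j)" by simp
    then have "(Suc (Suc m) - j) choose j = ((Suc m - j) choose i) + ((Suc m - j) choose j)"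
      using Suc by simp
    moreover have "Suc m - j = m - i" using Suc by simp
    ultimately show ?thesis using Suc by (simp add: fib_coeff_def algebra_simps)
  next
    case False
    with j have "j = Suc (Suc m)" by simp
    then show ?thesis using Suc by (simp add: fib_coeff_def)
  qed
qed (simp add: fib_coeff_def)

lemma qseq_expansion: "qseq m y = (\<Sum>j\<le>m. fib_coeff m j * (opC ^^ j) (\<lambda>_. 1) y)"
proof (induction m arbitrary: y rule: qseq.induct)
  case (3 m)
  define P where "P j = (opC ^^ j) (\<lambda>_. 1)" for j
  have "qseq m = (\<lambda>y. \<Sum>j\<le>m. fib_coeff m j * P j y)" using "3.IH"(2) by (auto simp: P_def)
  then have "opC (qseq m) y = (\<Sum>j\<le>m. fib_coeff m j * P (Suc j) y)"
    by (simp add: opC_sum P_def)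
  also have "\<dots> = (\<Sum>j\<le>Suc m. (if j = 0 then 0 else fib_coeff m (j - 1)) * P j y)"
    by (simp add: sum.atMost_Suc_shift del: sum.atMost_Suc)
  also have "\<dots> = (\<Sum>j\<le>Suc (Suc m). (if j = 0 then 0 else fib_coeff m (j - 1)) * P j y)"
    by (simp add: fib_coeff_def)
  finally have shifted: "opC (qseq m) y = \<dots>" .
  have previous: "qseq (Suc m) y = (\<Sum>j\<le>Suc (Suc m). fib_coeff (Suc m) j * P j y)"
    using "3.IH"(1)[of y] by (simp add: fib_coeff_def P_def)
  have "qseq (Suc (Suc m)) y
      = (\<Sum>j\<le>Suc (Suc m). (fib_coeff (Suc m) j - (if j = 0 then 0 else fib_coeff m (j - 1))) * P j y)"
    unfolding qseq.simps previous shifted sum_subtractf[symmetric] by (simp add: algebra_simps)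
  also have "\<dots> = (\<Sum>j\<le>Suc (Suc m). fib_coeff (Suc (Suc m)) j * P j y)"
    by (rule sum.cong) (simp_all add: fib_coeff_pascal)
  finally show ?case by (simp add: P_def)
qed (simp_all add: fib_coeff_def)

definition recurrence_lhs :: "(nat \<Rightarrow> 'a::comm_ring_1) \<Rightarrow> nat \<Rightarrow> 'a" where
  "recurrence_lhs u n = (\<Sum>d\<le>n. (-1)^d * of_nat ((n+d) choose (2*d)) * u (n - d))"

(* Reindexing j = n - d turns the (truncated) expansion of Q_(2n) into the recurrence. *)
lemma recurrence_lhs_reversed:
  fixes u :: "nat \<Rightarrow> 'a::comm_ring_1"
  shows "(\<Sum>j\<le>n. (-1)^j * of_nat ((2*n - j) choose j) * u j) = (-1)^n * recurrence_lhs u n"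
proof -
  have "(\<Sum>j\<le>n. (-1)^j * of_nat ((2*n - j) choose j) * u j)
      = (\<Sum>d\<le>n. (-1)^(n - d) * of_nat ((2*n - (n - d)) choose (n - d)) * u (n - d))"
    using sum.atLeastAtMost_rev[of "\<lambda>j. (-1)^j * of_nat ((2*n - j) choose j) * u j" 0 n]
    by (simp add: atLeast0AtMost)
  also have "\<dots> = (\<Sum>d\<le>n. (-1)^n * ((-1)^d * of_nat ((n+d) choose (2*d)) * u (n - d)))"
  proof (rule sum.cong)
    fix d assume "d \<in> {..n}"
    then have d: "d \<le> n" by simp
    then have "2*n - (n - d) = n + d" by simp
    moreover have "(n+d) choose (n - d) = (n+d) choose (2*d)"
      using binomial_symmetric[of "n - d" "n + d"] d by (simp add: numeral_2_eq_2)
    moreover have "(-1::'a)^(n - d) = (-1)^n * (-1)^d"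
    proof -
      have "(-1::'a)^n = (-1)^(n - d) * (-1)^d" using d by (simp add: power_add[symmetric])
      then show ?thesis by (simp add: algebra_simps)
    qed
    ultimately show "(-1)^(n - d) * of_nat ((2*n - (n - d)) choose (n - d)) * u (n - d)
        = (-1)^n * ((-1)^d * of_nat ((n+d) choose (2*d)) * u (n - d))"
      by (simp add: algebra_simps)
  qed simp
  finally show ?thesis by (simp add: recurrence_lhs_def sum_distrib_left)
qed

(* The leading coefficient is 1, so a solution is determined by its initial value. *)
lemma recurrence_determines:
  fixes u v :: "nat \<Rightarrow> 'a::comm_ring_1"
  assumes "\<And>n. 0 < n \<Longrightarrow> recurrence_lhs u n = 0" "\<And>n. 0 < n \<Longrightarrow> recurrence_lhs v n = 0"
    and "u 0 = v 0"
  shows "u n = v n"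
proof (induction n rule: less_induct)
  case (less n)
  show ?case
  proof (cases n)
    case (Suc m)
    have peel: "recurrence_lhs w (Suc m)
        = w (Suc m) + (\<Sum>d\<le>m. (-1)^(Suc d) * of_nat ((Suc m + Suc d) choose (2 * Suc d)) * w (m - d))"
      for w :: "nat \<Rightarrow> 'a"
      unfolding recurrence_lhs_def by (simp only: sum.atMost_Suc_shift) simp
    have "(\<Sum>d\<le>m. (-1)^(Suc d) * of_nat ((Suc m + Suc d) choose (2 * Suc d)) * u (m - d))
        = (\<Sum>d\<le>m. (-1)^(Suc d) * of_nat ((Suc m + Suc d) choose (2 * Suc d)) * v (m - d))"
      using less Suc by (intro sum.cong) simp_all
    then show ?thesis
      using assms(1,2)[of "Suc m"] peel[of u] peel[of v] Suc by (simp add: add_eq_0_iff2)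
  qed (simp add: assms(3))
qed

(* The values (C^n 1)(0) satisfy the recurrence, by Q_(2n)(0) = 0 and the expansion of Q_(2n). *)
lemma opC_values_recurrence:
  assumes "0 < n"
  shows "recurrence_lhs (\<lambda>j. (opC ^^ j) (\<lambda>_. 1) 0) n = 0"
proof -
  let ?c = "\<lambda>j. (opC ^^ j) (\<lambda>_. 1) 0"
  have "0 = qseq (2*n) 0" using qseq_even_at_0[OF assms] by simp
  also have "\<dots> = (\<Sum>j\<le>2*n. (-1)^j * of_nat ((2*n - j) choose j) * ?c j)"
    by (simp add: qseq_expansion fib_coeff_def)
  also have "\<dots> = (\<Sum>j\<le>n. (-1)^j * of_nat ((2*n - j) choose j) * ?c j)"
    by (rule sum.mono_neutral_right) auto
  also have "\<dots> = (-1)^n * recurrence_lhs ?c n" by (rule recurrence_lhs_reversed)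
  finally show ?thesis by simp
qed

abbreviation seidel_rat :: "nat \<Rightarrow> nat \<Rightarrow> rat" where
  "seidel_rat k m \<equiv> of_nat (seidel k m)"

lemma seidel_step:
  "1 \<le> k \<Longrightarrow> k \<le> (m + 3) div 2 \<Longrightarrow> seidel k (Suc (Suc m)) =
     (if even m then (\<Sum>i\<in>{k..(m + 2) div 2}. seidel i (Suc m)) else (\<Sum>i\<in>{1..k}. seidel i (Suc m)))"
  by (simp only: seidel.simps) simp

lemma seidel_outside: "(m + 1) div 2 < k \<Longrightarrow> seidel k m = 0"
  by (induction k m rule: seidel.induct) auto

declare seidel.simps(3)[simp del]

lemma seidel_even_row:
  assumes "1 \<le> k" "k \<le> Suc n"
  shows "seidel k (2*n + 2) = (\<Sum>i\<in>{k..Suc n}. seidel i (2*n + 1))"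
  using seidel_step[of k "2*n"] assms by simp

lemma seidel_odd_row:
  assumes "1 \<le> k" "k \<le> n + 2"
  shows "seidel k (2*n + 3) = (\<Sum>i\<in>{1..k}. seidel i (2*n + 2))"
proof -
  have "(Suc (2*n) + 3) div 2 = n + 2" by simp
  then show ?thesis using seidel_step[of k "Suc (2*n)"] assms by (simp add: numeral_3_eq_3)
qed

definition genocchi_seq :: "nat \<Rightarrow> rat" where
  "genocchi_seq j = (if j = 0 then 1 else seidel_rat 1 (2*j))"

(* Closed forms of the rows of the triangle in terms of H:
     g_(k,2n) = even_row k n   and   g_(k,2n+1) = odd_row k n. *)
definition even_row :: "nat \<Rightarrow> nat \<Rightarrow> rat" where
  "even_row k n = (\<Sum>d<k. (-1)^d * of_nat ((k - 1 + d) choose (2*d)) * genocchi_seq (n - d))"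

definition odd_row :: "nat \<Rightarrow> nat \<Rightarrow> rat" where
  "odd_row k n = (\<Sum>d<k. (-1)^d * of_nat ((k + d) choose (2*d + 1)) * genocchi_seq (n - d))"

lemma even_row_extend:
  "0 < k \<Longrightarrow> k \<le> K \<Longrightarrow> even_row k n = (\<Sum>d<K. (-1)^d * of_nat ((k - 1 + d) choose (2*d)) * genocchi_seq (n - d))"
  unfolding even_row_def by (rule sum.mono_neutral_left) auto

lemma odd_row_extend:
  "k \<le> K \<Longrightarrow> odd_row k n = (\<Sum>d<K. (-1)^d * of_nat ((k + d) choose (2*d + 1)) * genocchi_seq (n - d))"
  unfolding odd_row_def by (rule sum.mono_neutral_left) auto

lemma hockey_stick_odd: "(\<Sum>i\<in>{1..k}. (i + d) choose (2*d + 1)) = (k + 1 + d) choose (2*d + 2)"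
  by (induction k) (simp_all add: add.commute add.left_commute)

lemma hockey_stick_even: "(\<Sum>i\<in>{1..k}. (i - 1 + d) choose (2*d)) = (k + d) choose (2*d + 1)"
  by (induction k) (simp_all add: add.commute add.left_commute)

(* Partial sums of an even row form the next odd row, mirroring g_(k,2n+1) = sum_(i<=k) g_(i,2n). *)
lemma even_row_prefix_sum:
  assumes "1 \<le> k"
  shows "(\<Sum>i\<in>{1..k}. even_row i n) = odd_row k n"
proof -
  have "(\<Sum>i\<in>{1..k}. even_row i n)
      = (\<Sum>i\<in>{1..k}. \<Sum>d<k. (-1)^d * of_nat ((i - 1 + d) choose (2*d)) * genocchi_seq (n - d))"
    by (rule sum.cong[OF refl], rule even_row_extend) auto
  also have "\<dots> = (\<Sum>d<k. (-1)^d * genocchi_seq (n - d) * of_nat (\<Sum>i\<in>{1..k}. (i - 1 + d) choose (2*d)))"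
    by (subst sum.swap) (simp add: sum_distrib_left algebra_simps)
  also have "\<dots> = odd_row k n"
    by (simp only: hockey_stick_even) (simp add: odd_row_def algebra_simps)
  finally show ?thesis .
qed

lemma even_row_peel:
  assumes "0 < k"
  shows "even_row k (Suc n)
    = genocchi_seq (Suc n) - (\<Sum>d<k. (-1)^d * of_nat ((k + d) choose (2*d + 2)) * genocchi_seq (n - d))"
proof -
  obtain k' where k': "k = Suc k'" using assms by (cases k) auto
  have "even_row k (Suc n) = genocchi_seq (Suc n)
      + (\<Sum>d<k'. (-1)^(Suc d) * of_nat ((k' + Suc d) choose (2 * Suc d)) * genocchi_seq (n - d))"
    unfolding even_row_def k' by (simp only: sum.lessThan_Suc_shift) simp
  also have "(\<Sum>d<k'. (-1)^(Suc d) * of_nat ((k' + Suc d) choose (2 * Suc d)) * genocchi_seq (n - d))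
      = - (\<Sum>d<k. (-1)^d * of_nat ((k + d) choose (2*d + 2)) * genocchi_seq (n - d))"
    by (simp add: k' binomial_eq_0 sum_negf)
  finally show ?thesis by simp
qed

(* Partial sums of an odd row, matching g_(k,2n+2) = sum_(i>=k) g_(i,2n+1). *)
lemma odd_row_prefix_sum:
  assumes "1 \<le> k"
  shows "(\<Sum>i\<in>{1..<k}. odd_row i n) = genocchi_seq (Suc n) - even_row k (Suc n)"
proof -
  have "(\<Sum>i\<in>{1..<k}. odd_row i n)
      = (\<Sum>i\<in>{1..<k}. \<Sum>d<k. (-1)^d * of_nat ((i + d) choose (2*d + 1)) * genocchi_seq (n - d))"
    by (rule sum.cong[OF refl], rule odd_row_extend) auto
  also have "\<dots> = (\<Sum>d<k. (-1)^d * genocchi_seq (n - d) * of_nat (\<Sum>i\<in>{1..<k}. (i + d) choose (2*d + 1)))"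
    by (subst sum.swap) (simp add: sum_distrib_left algebra_simps)
  also have "\<dots> = (\<Sum>d<k. (-1)^d * of_nat ((k + d) choose (2*d + 2)) * genocchi_seq (n - d))"
  proof (rule sum.cong[OF refl])
    fix d
    have "{1..<k} = {1..k - 1}" using assms by auto
    then have "(\<Sum>i\<in>{1..<k}. (i + d) choose (2*d + 1)) = (k + d) choose (2*d + 2)"
      using hockey_stick_odd[where k = "k - 1" and d = d] assms by simp
    then show "(-1)^d * genocchi_seq (n - d) * of_nat (\<Sum>i\<in>{1..<k}. (i + d) choose (2*d + 1))
        = (-1)^d * of_nat ((k + d) choose (2*d + 2)) * genocchi_seq (n - d)"
      by simp
  qed
  finally show ?thesis using even_row_peel[of k n] assms by simp
qed

lemma even_row_difference:
  assumes "1 \<le> k"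
  shows "even_row (Suc k) (Suc n) = even_row k (Suc n) - odd_row k n"
proof -
  have "(\<Sum>i\<in>{1..<Suc k}. odd_row i n) = (\<Sum>i\<in>{1..<k}. odd_row i n) + odd_row k n"
    using assms by simp
  then show ?thesis using odd_row_prefix_sum[of k n] odd_row_prefix_sum[of "Suc k" n] assms by simp
qed

definition odd_row_formula :: "nat \<Rightarrow> bool" where
  "odd_row_formula n \<longleftrightarrow> (\<forall>k. 1 \<le> k \<and> k \<le> Suc n \<longrightarrow> seidel_rat k (2*n + 1) = odd_row k n)"

lemma even_row_formula:
  assumes odd: "odd_row_formula n" and k: "1 \<le> k" "k \<le> Suc n"
  shows "seidel_rat k (2*n + 2) = even_row k (Suc n)"
proof -
  have row: "seidel_rat i (2*n + 2) = (\<Sum>j\<in>{i..Suc n}. odd_row j n)" if "1 \<le> i" "i \<le> Suc n" for i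
  proof -
    have "seidel_rat i (2*n + 2) = (\<Sum>j\<in>{i..Suc n}. seidel_rat j (2*n + 1))"
      using seidel_even_row[OF that] by simp
    also have "\<dots> = (\<Sum>j\<in>{i..Suc n}. odd_row j n)"
      using odd that by (intro sum.cong) (auto simp: odd_row_formula_def)
    finally show ?thesis .
  qed
  have "genocchi_seq (Suc n) = (\<Sum>j\<in>{1..Suc n}. odd_row j n)"
    using row[of 1] by (simp add: genocchi_seq_def)
  also have "\<dots> = (\<Sum>j\<in>{1..<k}. odd_row j n) + (\<Sum>j\<in>{k..Suc n}. odd_row j n)"
  proof -
    have split: "{1..Suc n} = {1..<k} \<union> {k..Suc n}" using k by auto
    show ?thesis unfolding split by (rule sum.union_disjoint) auto
  qed
  finally show ?thesis using row[OF k] odd_row_prefix_sum[OF k(1), of n] by simp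
qed

(* The entry just beyond the end of row 2n+2 is zero: this is where the recurrence comes from. *)
lemma even_row_vanishes:
  assumes odd: "odd_row_formula n"
  shows "even_row (n + 2) (Suc n) = 0"
proof -
  have "even_row (Suc n) (Suc n) = seidel_rat (Suc n) (2*n + 2)"
    using even_row_formula[OF odd, of "Suc n"] by simp
  also have "\<dots> = seidel_rat (Suc n) (2*n + 1)" using seidel_even_row[of "Suc n" n] by simp
  also have "\<dots> = odd_row (Suc n) n" using odd by (simp add: odd_row_formula_def)
  finally show ?thesis using even_row_difference[of "Suc n" n] by simp
qed

lemma odd_row_formula_step:
  assumes odd: "odd_row_formula n"
  shows "odd_row_formula (Suc n)"
  unfolding odd_row_formula_def
proof (intro allI impI)
  fix k assume k: "1 \<le> k \<and> k \<le> Suc (Suc n)"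
  have even: "seidel_rat i (2*n + 2) = even_row i (Suc n)" if "i \<in> {1..k}" for i
  proof (cases "i \<le> Suc n")
    case True then show ?thesis using that even_row_formula[OF odd] by simp
  next
    case False
    then have "i = n + 2" using that k by simp
    moreover have "seidel (n + 2) (2*n + 2) = 0" by (rule seidel_outside) simp
    ultimately show ?thesis using even_row_vanishes[OF odd] by simp
  qed
  have "seidel_rat k (2 * Suc n + 1) = (\<Sum>i\<in>{1..k}. seidel_rat i (2*n + 2))"
    using seidel_odd_row[of k n] k by (simp add: numeral_3_eq_3)
  also have "\<dots> = (\<Sum>i\<in>{1..k}. even_row i (Suc n))" by (rule sum.cong[OF refl], rule even)
  also have "\<dots> = odd_row k (Suc n)" using k by (intro even_row_prefix_sum) simp
  finally show "seidel_rat k (2 * Suc n + 1) = odd_row k (Suc n)" .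
qed

lemma odd_row_formula_holds: "odd_row_formula n"
proof (induction n)
  case 0
  show ?case by (auto simp: odd_row_formula_def odd_row_def genocchi_seq_def)
next
  case (Suc n)
  then show ?case by (rule odd_row_formula_step)
qed

lemma genocchi_seq_recurrence:
  assumes "0 < N"
  shows "recurrence_lhs genocchi_seq N = 0"
proof -
  obtain n where n: "N = Suc n" using assms by (cases N) auto
  have "recurrence_lhs genocchi_seq N = even_row (Suc N) N"
    by (simp add: recurrence_lhs_def even_row_def lessThan_Suc_atMost)
  then show ?thesis using even_row_vanishes[OF odd_row_formula_holds[of n]] n by simp
qed

lemma cf_tail_genocchi: "cf_tail 1 N = stieltjes_cf genocchi_weight N"
proof -
  have "(\<lambda>i. of_nat (cf_e (1 + i))) = genocchi_weight" by (simp add: fun_eq_iff genocchi_weight_def)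
  then show ?thesis by (simp only: cf_tail_stieltjes)
qed

lemma opC_values_genocchi: "(opC ^^ n) (\<lambda>_. 1) 0 = genocchi_seq n"
  by (rule recurrence_determines[OF opC_values_recurrence genocchi_seq_recurrence])
    (simp_all add: genocchi_seq_def)

theorem corollary3p6:
  shows "\<forall>N n. n \<le> N \<longrightarrow>
           fps_nth (cf_tail 1 N) n = (if n = 0 then 1 else of_nat (median_genocchi n))"
proof (intro allI impI)
  fix N n :: nat
  assume "n \<le> N"
  have "fps_nth (cf_tail 1 N) n = bdyck genocchi_weight N (2*n) 0"
    by (simp only: cf_tail_genocchi stieltjes_cf_nth)
  also have "\<dots> = contracted n 0"
    using \<open>n \<le> N\<close> by (simp add: bdyck_eq_dyck contracted_def)
  also have "\<dots> = genocchi_seq n"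
    by (simp add: opC_iterate_at_0[symmetric] opC_values_genocchi)
  finally show "fps_nth (cf_tail 1 N) n = (if n = 0 then 1 else of_nat (median_genocchi n))"
    by (simp add: genocchi_seq_def median_genocchi_def)
qed

end
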